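(* Assume every $f_i$ ($i=1,\dots,q$) is Lipschitz continuous with respect to the continuous variables, and consider the bound-constrained problem (PB): minimize $F(x)=(f_1(x),\dots,f_q(x))^\top$ subject to $x\in X\cap\mathcal Z$. If $x^\star\in X\cap\mathcal Z$ is Pareto-Clarke-Jahn stationary w.r.t. the continuous variables for (PB), then $x^\star$ is Pareto-Clarke stationary w.r.t. the continuous variables for (PB).
   Context: Fix integers $n,q\ge1$. Let $\{1,\dots,n\}=I^c\cup I^z$ with $I^c\cap I^z=\emptyset$ and $I^c,I^z\neq\emptyset$; for $x\in\mathbb R^n$ write $x_c=(x_i)_{i\in I^c}$, $x_z=(x_i)_{i\in I^z}$. Let $l,u\in\mathbb R^n$ with $l_i<u_i$, and $l_i,u_i\in\mathbb Z$ for $i\in I^z$. $X=\{x: l_i\le x_i\le u_i\ \forall i\}$, $\mathcal Z=\{x: x_i\in\mathbb Z\ \forall i\in I^z\}$. A function $h:\mathbb R^n\to\mathbb R$ is Lipschitz continuous with respect to the continuous variables if there is $L_h$ with $|h(x)-h(y)|\le L_h\|x-y\|$ whenever $x_i=y_i$ for all $i\in I^z$. For such $h$ and $s\in\mathbb R^n$ with $s_i=0$ ($i\in I^z$): $h^{Cl}_c(x;s)=\limsup_{y_c\to x_c,\ y_z=x_z,\ t\downarrow0}\frac{h(y+ts)-h(y)}{t}$, and $\partial_c h(x)=\{v\in\mathbb R^n: v_i=0\ \forall i\in I^z,\ h^{Cl}_c(x;s)\ge s^\top v\ \forall s \text{ with } s_i=0\ \forall i\in I^z\}$. For $x\in X\cap\mathcal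 Z$ and $d\in D^c(x)$, the Clarke-Jahn generalized directional derivative is $h^\circ_c(x;d)=\limsup\frac{h(y+td)-h(y)}{t}$, the limsup taken over $y_c\to x_c$, $y_z=x_z$, $y\in X\cap\mathcal Z$, $t\downarrow0$, $y+td\in X\cap\mathcal Z$. For $x\in X\cap\mathcal Z$, $D^c(x)=\{s\in\mathbb R^n: s_i=0\ (i\in I^z);\ s_i\ge 0\ (i\in I^c,\ x_i=l_i);\ s_i\le 0\ (i\in I^c,\ x_i=u_i);\ s_i\in\mathbb R\ (i\in I^c,\ l_i<x_i<u_i)\}$. A point $x^\star\in X\cap\mathcal Z$ is Pareto-Clarke-Jahn stationary w.r.t. the continuous variables for (PB) if for every $d\in D^c(x^\star)$ there is $j_d\in\{1,\dots,q\}$ with $(f_{j_d})^\circ_c(x^\star;d)\ge0$. It is Pareto-Clarke stationary w.r.t. the continuous variables for (PB) if there exist $\sigma\in\mathbb R^q$, $\sigma\ge0$ componentwise, $\sigma\ne0$, and $\bar\xi\in\sum_{i=1}^q\sigma_i\partial_c f_i(x^\star)$ (Minkowski sum) with $\bar\xi^\top d\ge0$ for all $d\in D^c(x^\star)$. *)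

theory Defs
  imports "HOL-Analysis.Analysis" "HOL-Library.Liminf_Limsup"
begin

text \<open>Vectors in R^n are rendered as real^'n; the index set {1..n} is the finite type 'n.
  Iz is the set of integer indices (I^z).\<close>

definition box_X :: "real^'n \<Rightarrow> real^'n \<Rightarrow> (real^'n) set" where
  "box_X l u = {x. \<forall>i. l$i \<le> x$i \<and> x$i \<le> u$i}"

definition int_Z :: "'n set \<Rightarrow> (real^'n) set" where
  "int_Z Iz = {x. \<forall>i\<in>Iz. x$i \<in> \<int>}"

definition lipschitz_c :: "'n set \<Rightarrow> (real^'n \<Rightarrow> real) \<Rightarrow> bool" where
  "lipschitz_c Iz h \<longleftrightarrow> (\<exists>L. \<forall>x y. (\<forall>i\<in>Iz. x$i = y$i) \<longrightarrow> \<bar>h x - h y\<bar> \<le> L * norm (x - y))"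

definition clarke_c :: "'n set \<Rightarrow> (real^'n \<Rightarrow> real) \<Rightarrow> real^'n \<Rightarrow> real^'n \<Rightarrow> ereal" where
  "clarke_c Iz h x s =
     Limsup (at (x, 0) within {(y, t). (\<forall>i\<in>Iz. y$i = x$i) \<and> t > 0})
            (\<lambda>(y, t). ereal ((h (y + t *\<^sub>R s) - h y) / t))"

definition subdiff_c :: "'n set \<Rightarrow> (real^'n \<Rightarrow> real) \<Rightarrow> real^'n \<Rightarrow> (real^'n) set" where
  "subdiff_c Iz h x = {v. (\<forall>i\<in>Iz. v$i = 0) \<and>
      (\<forall>s. (\<forall>i\<in>Iz. s$i = 0) \<longrightarrow> clarke_c Iz h x s \<ge> ereal (s \<bullet> v))}"

definition clarke_jahn_c :: "'n set \<Rightarrow> real^'n \<Rightarrow> real^'n \<Rightarrow> (real^'n \<Rightarrow> real) \<Rightarrow> real^'n \<Rightarrow> real^'n \<Rightarrow> ereal" where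
  "clarke_jahn_c Iz l u h x d =
     Limsup (at (x, 0) within {(y, t). (\<forall>i\<in>Iz. y$i = x$i) \<and> y \<in> box_X l u \<inter> int_Z Iz \<and> t > 0
                                   \<and> y + t *\<^sub>R d \<in> box_X l u \<inter> int_Z Iz})
            (\<lambda>(y, t). ereal ((h (y + t *\<^sub>R d) - h y) / t))"

definition dirs_c :: "'n set \<Rightarrow> real^'n \<Rightarrow> real^'n \<Rightarrow> real^'n \<Rightarrow> (real^'n) set" where
  "dirs_c Iz l u x = {s. (\<forall>i\<in>Iz. s$i = 0) \<and>
      (\<forall>i. i \<notin> Iz \<longrightarrow> x$i = l$i \<longrightarrow> s$i \<ge> 0) \<and>
      (\<forall>i. i \<notin> Iz \<longrightarrow> x$i = u$i \<longrightarrow> s$i \<le> 0)}"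

definition pareto_clarke_jahn_stationary_c ::
  "'n set \<Rightarrow> real^'n \<Rightarrow> real^'n \<Rightarrow> nat \<Rightarrow> (nat \<Rightarrow> real^'n \<Rightarrow> real) \<Rightarrow> real^'n \<Rightarrow> bool" where
  "pareto_clarke_jahn_stationary_c Iz l u q f xs \<longleftrightarrow>
     xs \<in> box_X l u \<inter> int_Z Iz \<and>
     (\<forall>d\<in>dirs_c Iz l u xs. \<exists>j\<in>{1..q}. clarke_jahn_c Iz l u (f j) xs d \<ge> 0)"

definition minkowski_sum_scaled :: "nat \<Rightarrow> (nat \<Rightarrow> real) \<Rightarrow> (nat \<Rightarrow> (real^'n) set) \<Rightarrow> (real^'n) set" where
  "minkowski_sum_scaled q \<sigma> A = {(\<Sum>i\<in>{1..q}. \<sigma> i *\<^sub>R v i) | v. \<forall>i\<in>{1..q}. v i \<in> A i}"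

definition pareto_clarke_stationary_c ::
  "'n set \<Rightarrow> real^'n \<Rightarrow> real^'n \<Rightarrow> nat \<Rightarrow> (nat \<Rightarrow> real^'n \<Rightarrow> real) \<Rightarrow> real^'n \<Rightarrow> bool" where
  "pareto_clarke_stationary_c Iz l u q f xs \<longleftrightarrow>
     xs \<in> box_X l u \<inter> int_Z Iz \<and>
     (\<exists>\<sigma>::nat \<Rightarrow> real. (\<forall>i\<in>{1..q}. \<sigma> i \<ge> 0) \<and> (\<exists>i\<in>{1..q}. \<sigma> i \<noteq> 0) \<and>
        (\<exists>\<xi> \<in> minkowski_sum_scaled q \<sigma> (\<lambda>i. subdiff_c Iz (f i) xs).
            \<forall>d\<in>dirs_c Iz l u xs. \<xi> \<bullet> d \<ge> 0))"

end

theory Submission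
  imports Defs
begin

text \<open>
  For directions d that keep the integer variables fixed, the Clarke derivatives
  p_j(d) of the f_j at x* are finite, sublinear in d, and dominate the Clarke-Jahn
  derivatives. Pareto-Clarke-Jahn stationarity therefore says that the convex functions
  p_j have no common direction of strict descent in the convex cone D = D^c(x*).
  By the Fan-Glicksberg-Hoffman theorem of the alternative some nonzero sigma >= 0 makes
  the sublinear function psi = sum_j sigma_j p_j nonnegative on D. A Hahn-Banach type
  sandwich between psi and the zero function on D yields a linear functional xi <= psi
  that is nonnegative on D, and sandwiching once more splits xi into a sum of
  sigma_j v_j with each v_j a subgradient of p_j, i.e. v_j in the Clarke subdifferential
  of f_j at x*.
\<close>

section \<open>Strict epigraphs and a sandwich theorem\<close>

lemma convex_combination_strict_less:
  fixes x y r s u v :: real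
  assumes "x < r" "y < s" "0 \<le> u" "0 \<le> v" "u + v = 1"
  shows "u * x + v * y < u * r + v * s"
  using assms by (smt (verit) mult_left_mono mult_strict_left_mono)

lemma convex_strict_epigraph:
  assumes "convex_on S f"
  shows "convex {(x, r). x \<in> S \<and> f x < r}"
proof (rule convexI, clarsimp)
  fix x r y s and u v :: real
  assume "x \<in> S" "f x < r" "y \<in> S" "f y < s" "0 \<le> u" "0 \<le> v" "u + v = 1"
  with assms have "u *\<^sub>R x + v *\<^sub>R y \<in> S" "f (u *\<^sub>R x + v *\<^sub>R y) \<le> u * f x + v * f y"
    unfolding convex_on_def convex_def by blast+
  moreover have "u * f x + v * f y < u * r + v * s"
    using \<open>f x < r\<close> \<open>f y < s\<close> \<open>0 \<le> u\<close> \<open>0 \<le> v\<close> \<open>u + v = 1\<close>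
    by (rule convex_combination_strict_less)
  ultimately show "u *\<^sub>R x + v *\<^sub>R y \<in> S \<and> f (u *\<^sub>R x + v *\<^sub>R y) < u * r + v * s"
    by simp
qed

lemma concave_strict_hypograph:
  assumes "concave_on S g"
  shows "convex {(x, r). x \<in> S \<and> r < g x}"
proof -
  have "linear (\<lambda>(x :: 'a, r :: real). (x, - r))"
    by (auto simp: linear_iff)
  moreover have "convex {(x, r). x \<in> S \<and> - g x < r}"
    using assms unfolding concave_on_def by (rule convex_strict_epigraph)
  ultimately have "convex ((\<lambda>(x, r). (x, - r)) -` {(x, r). x \<in> S \<and> - g x < r})"
    by (rule convex_linear_vimage)
  moreover have "(\<lambda>(x, r). (x, - r)) -` {(x, r). x \<in> S \<and> - g x < r} = {(x, r). x \<in> S \<and> r < g x}"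
    by auto
  ultimately show ?thesis
    by simp
qed

lemma convex_strict_sublevel:
  assumes "convex_on D f"
  shows "convex {x \<in> D. f x < c}"
proof (rule convexI, clarsimp)
  fix x y and u v :: real
  assume "x \<in> D" "f x < c" "y \<in> D" "f y < c" "0 \<le> u" "0 \<le> v" "u + v = 1"
  with assms have "u *\<^sub>R x + v *\<^sub>R y \<in> D" "f (u *\<^sub>R x + v *\<^sub>R y) \<le> u * f x + v * f y"
    unfolding convex_on_def convex_def by blast+
  moreover have "u * f x + v * f y < u * c + v * c"
    using convex_combination_strict_less \<open>f x < c\<close> \<open>f y < c\<close> \<open>0 \<le> u\<close> \<open>0 \<le> v\<close> \<open>u + v = 1\<close> .
  ultimately show "u *\<^sub>R x + v *\<^sub>R y \<in> D \<and> f (u *\<^sub>R x + v *\<^sub>R y) < c"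
    using \<open>u + v = 1\<close> by (simp flip: distrib_right)
qed

lemma convex_on_sum_fun:
  assumes "convex S" and "\<forall>j\<in>J. convex_on S (h j)"
  shows "convex_on S (\<lambda>x. \<Sum>j\<in>J. h j x)"
  using assms(2)
proof (induction J rule: infinite_finite_induct)
  case (infinite J)
  then show ?case
    using assms(1) by (simp add: convex_on_const)
next
  case empty
  then show ?case
    using assms(1) by (simp add: convex_on_const)
next
  case (insert j J)
  then show ?case
    by (simp add: convex_on_add)
qed

lemma convex_concave_separation:
  fixes f g :: "'a::euclidean_space \<Rightarrow> real"
  assumes f: "convex_on UNIV f" and g: "concave_on C g" and g_le_f: "\<forall>x\<in>C. g x \<le> f x"
  shows "\<exists>w c. (w, c) \<noteq> 0 \<and> (\<forall>x. \<forall>y\<in>C. \<forall>t. f x - g y < t \<longrightarrow> 0 \<le> w \<bullet> (x - y) + c * t)"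
proof -
  let ?A = "{(x, r). x \<in> UNIV \<and> f x < r}" and ?B = "{(x, r). x \<in> C \<and> r < g x}"
  let ?D = "\<Union>p\<in>?A. \<Union>q\<in>?B. {p - q}"
  have "0 \<notin> ?D"
  proof clarify
    fix x r y s
    assume "0 = (x, r) - (y, s)" "f x < r" "y \<in> C" "s < g y"
    then show False
      using g_le_f[rule_format, of y] by (simp add: zero_prod_def)
  qed
  moreover have "convex ?D"
    using convex_differences[OF convex_strict_epigraph[OF f] concave_strict_hypograph[OF g]] by simp
  ultimately have "\<exists>a. a \<noteq> 0 \<and> (\<forall>d\<in>?D. 0 \<le> a \<bullet> d)"
    by (intro separating_hyperplane_set_0)
  then obtain a where a: "a \<noteq> 0 \<and> (\<forall>d\<in>?D. 0 \<le> a \<bullet> d)" ..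
  obtain w c where wc: "a = (w, c)"
    by (cases a)
  have sep: "0 \<le> (w, c) \<bullet> (p - q)" if "p \<in> ?A" "q \<in> ?B" for p q
    using a wc that by blast
  have "0 \<le> w \<bullet> (x - y) + c * t" if "y \<in> C" "f x - g y < t" for x y t
  proof -
    define e where "e = (t - (f x - g y)) / 2"
    have "(x, f x + e) \<in> ?A" "(y, g y - e) \<in> ?B"
      using that unfolding e_def by auto
    from sep[OF this] show ?thesis
      unfolding e_def by (simp add: inner_Pair algebra_simps)
  qed
  with a wc show ?thesis
    by blast
qed

lemma convex_concave_sandwich:
  fixes f g :: "'a::euclidean_space \<Rightarrow> real"
  assumes f: "convex_on UNIV f" and g: "concave_on C g"
    and "0 \<in> C" "f 0 = 0" "g 0 = 0" and g_le_f: "\<forall>x\<in>C. g x \<le> f x"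
  shows "\<exists>z. (\<forall>x. z \<bullet> x \<le> f x) \<and> (\<forall>x\<in>C. g x \<le> z \<bullet> x)"
proof -
  obtain w c where "(w, c) \<noteq> 0"
    and sep: "\<And>x y t. y \<in> C \<Longrightarrow> f x - g y < t \<Longrightarrow> 0 \<le> w \<bullet> (x - y) + c * t"
    using convex_concave_separation[OF f g g_le_f] by blast
  have "0 \<le> c"
    using sep[of 0 0 1] assms by simp
  moreover have "c \<noteq> 0"
  proof
    assume "c = 0"
    then have "0 \<le> - (w \<bullet> w)"
      using sep[of 0 "- w" "f (- w) - g 0 + 1"] assms by simp
    then show False
      using \<open>(w, c) \<noteq> 0\<close> \<open>c = 0\<close> by (simp add: zero_prod_def) (metis inner_gt_zero_iff not_le)
  qed
  ultimately have "0 < c" by simp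
  define z where "z = - (1 / c) *\<^sub>R w"
  have "z \<bullet> x \<le> f x" for x
  proof (rule dense_ge)
    fix t assume "f x < t"
    then show "z \<bullet> x \<le> t"
      using sep[of 0 x t] assms \<open>0 < c\<close> by (simp add: z_def field_simps)
  qed
  moreover have "g y \<le> z \<bullet> y" if "y \<in> C" for y
  proof (rule dense_le)
    fix t assume "t < g y"
    then show "t \<le> z \<bullet> y"
      using sep[of y 0 "- t"] assms that \<open>0 < c\<close> by (simp add: z_def field_simps)
  qed
  ultimately show ?thesis
    by blast
qed

section \<open>Sublinear functions\<close>

definition sublinear :: "('a::real_vector \<Rightarrow> real) \<Rightarrow> bool" where
  "sublinear p \<longleftrightarrow> (\<forall>x y. p (x + y) \<le> p x + p y) \<and> (\<forall>c x. 0 \<le> c \<longrightarrow> p (c *\<^sub>R x) \<le> c * p x)"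

lemma sublinearI:
  assumes "\<And>x y. p (x + y) \<le> p x + p y" and "\<And>c x. 0 \<le> c \<Longrightarrow> p (c *\<^sub>R x) \<le> c * p x"
  shows "sublinear p"
  using assms unfolding sublinear_def by blast

lemma sublinear_add_le: "sublinear p \<Longrightarrow> p (x + y) \<le> p x + p y"
  unfolding sublinear_def by blast

lemma sublinear_scaleR_le: "sublinear p \<Longrightarrow> 0 \<le> c \<Longrightarrow> p (c *\<^sub>R x) \<le> c * p x"
  unfolding sublinear_def by blast

lemma sublinear_zero:
  assumes "sublinear p"
  shows "p 0 = 0"
  using sublinear_add_le[OF assms, of 0 0] sublinear_scaleR_le[OF assms, of 0 0] by simp

lemma sublinear_convex_on:
  assumes "sublinear p"
  shows "convex_on UNIV p"
proof (rule convex_onI)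
  fix t :: real and x y assume "0 < t" "t < 1"
  then show "p ((1 - t) *\<^sub>R x + t *\<^sub>R y) \<le> (1 - t) * p x + t * p y"
    using sublinear_add_le[OF assms] sublinear_scaleR_le[OF assms]
    by (smt (verit) less_eq_real_def)
qed simp

lemma sublinear_reflect:
  assumes "sublinear p"
  shows "sublinear (\<lambda>x. p (- x))"
proof (rule sublinearI)
  show "p (- (x + y)) \<le> p (- x) + p (- y)" for x y
    using sublinear_add_le[OF assms, of "- x" "- y"] by simp
  show "p (- (c *\<^sub>R x)) \<le> c * p (- x)" if "0 \<le> c" for c x
    using sublinear_scaleR_le[OF assms that, of "- x"] by simp
qed

lemma sublinear_cmult:
  assumes "sublinear p" "0 \<le> a"
  shows "sublinear (\<lambda>x. a * p x)"
proof (rule sublinearI)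
  show "a * p (x + y) \<le> a * p x + a * p y" for x y
    using mult_left_mono[OF sublinear_add_le[OF assms(1)] assms(2)] by (simp add: distrib_left)
  show "a * p (c *\<^sub>R x) \<le> c * (a * p x)" if "0 \<le> c" for c x
    using mult_left_mono[OF sublinear_scaleR_le[OF assms(1) that] assms(2)] by (simp add: mult_ac)
qed

lemma sublinear_sum:
  assumes "\<forall>j\<in>J. sublinear (p j)"
  shows "sublinear (\<lambda>x. \<Sum>j\<in>J. p j x)"
proof (rule sublinearI)
  show "(\<Sum>j\<in>J. p j (x + y)) \<le> (\<Sum>j\<in>J. p j x) + (\<Sum>j\<in>J. p j y)" for x y
    using assms by (simp add: sublinear_add_le sum_mono flip: sum.distrib)
  show "(\<Sum>j\<in>J. p j (c *\<^sub>R x)) \<le> c * (\<Sum>j\<in>J. p j x)" if "0 \<le> c" for c x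
    using assms that by (simp add: sublinear_scaleR_le sum_mono sum_distrib_left)
qed

lemma sublinear_has_subgradient:
  fixes p :: "'a::euclidean_space \<Rightarrow> real"
  assumes "sublinear p"
  shows "\<exists>w. \<forall>x. w \<bullet> x \<le> p x"
proof -
  have "concave_on UNIV (\<lambda>x. - p (- x))"
    using sublinear_convex_on[OF sublinear_reflect[OF assms]] by (simp add: concave_on_def)
  moreover have "- p (- x) \<le> p x" for x
    using sublinear_add_le[OF assms, of x "- x"] sublinear_zero[OF assms] by simp
  ultimately have "\<exists>w. (\<forall>x. w \<bullet> x \<le> p x) \<and> (\<forall>x\<in>UNIV. - p (- x) \<le> w \<bullet> x)"
    using assms by (intro convex_concave_sandwich) (simp_all add: sublinear_convex_on sublinear_zero)
  then show ?thesis
    by blast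
qed

lemma sublinear_sum_subgradient_decompose:
  fixes p :: "'j \<Rightarrow> 'a::euclidean_space \<Rightarrow> real"
  assumes "finite J" and "\<forall>j\<in>J. sublinear (p j)" and "\<forall>x. z \<bullet> x \<le> (\<Sum>j\<in>J. p j x)"
  shows "\<exists>v. (\<forall>j\<in>J. \<forall>x. v j \<bullet> x \<le> p j x) \<and> (\<Sum>j\<in>J. v j) = z"
  using assms
proof (induction J arbitrary: z rule: finite_induct)
  case empty
  then have "z \<bullet> z \<le> 0"
    by simp
  then have "z = 0"
    by (metis inner_gt_zero_iff not_le)
  then show ?case
    by simp
next
  case (insert j J)
  let ?rest = "\<lambda>x. \<Sum>i\<in>J. p i x"
  have rest: "sublinear ?rest"
    using insert.prems by (simp add: sublinear_sum)
  have "concave_on UNIV (\<lambda>x. z \<bullet> x - ?rest x)"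
    using sublinear_convex_on[OF rest]
    by (simp add: concave_on_def convex_on_def inner_add_right algebra_simps)
  moreover have "z \<bullet> x - ?rest x \<le> p j x" for x
    using insert by (simp add: algebra_simps)
  ultimately have "\<exists>u. (\<forall>x. u \<bullet> x \<le> p j x) \<and> (\<forall>x\<in>UNIV. z \<bullet> x - ?rest x \<le> u \<bullet> x)"
    using insert.prems rest
    by (intro convex_concave_sandwich) (simp_all add: sublinear_convex_on sublinear_zero)
  then obtain u where u: "\<forall>x. u \<bullet> x \<le> p j x" and zu: "\<forall>x. z \<bullet> x - ?rest x \<le> u \<bullet> x"
    by blast
  have "(z - u) \<bullet> x \<le> ?rest x" for x
    using zu[rule_format, of x] by (simp add: inner_diff_left)
  with insert obtain v where v: "\<forall>i\<in>J. \<forall>x. v i \<bullet> x \<le> p i x" "(\<Sum>i\<in>J. v i) = z - u"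
    by blast
  show ?case
  proof (intro exI conjI)
    show "\<forall>i\<in>insert j J. \<forall>x. (v(j := u)) i \<bullet> x \<le> p i x"
      using u v(1) by simp
    have "(\<Sum>i\<in>J. (v(j := u)) i) = (\<Sum>i\<in>J. v i)"
      using insert.hyps(2) by (intro sum.cong) auto
    then show "(\<Sum>i\<in>insert j J. (v(j := u)) i) = z"
      using insert.hyps v(2) by simp
  qed
qed

section \<open>Theorems of the alternative\<close>

lemma nonneg_slope_if_nonneg_on_pos:
  fixes c A :: real
  assumes "\<And>s. 0 < s \<Longrightarrow> 0 \<le> c * s + A"
  shows "0 \<le> c"
proof (rule ccontr)
  assume "\<not> 0 \<le> c"
  then have "0 \<le> c * ((\<bar>A\<bar> + 1) / - c) + A"
    by (intro assms divide_pos_pos) auto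
  moreover have "c * ((\<bar>A\<bar> + 1) / - c) = - (\<bar>A\<bar> + 1)"
    using \<open>\<not> 0 \<le> c\<close> by simp
  ultimately show False
    by linarith
qed

lemma nonneg_intercept_if_nonneg_on_pos:
  fixes c A :: real
  assumes "\<And>s. 0 < s \<Longrightarrow> 0 \<le> c * s + A"
  shows "0 \<le> A"
proof (rule field_le_epsilon)
  fix e :: real assume "0 < e"
  then have "0 \<le> c * (e / (\<bar>c\<bar> + 1)) + A"
    by (intro assms divide_pos_pos) auto
  moreover have "c * (e / (\<bar>c\<bar> + 1)) \<le> \<bar>c\<bar> * (e / (\<bar>c\<bar> + 1))"
    using \<open>0 < e\<close> by (intro mult_right_mono) auto
  moreover have "\<bar>c\<bar> * (e / (\<bar>c\<bar> + 1)) \<le> e"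
    using \<open>0 < e\<close> by (simp add: field_simps)
  ultimately show "0 \<le> A + e"
    by linarith
qed

lemma convex_joint_strict_epigraph_image:
  fixes a b :: "'a::real_vector \<Rightarrow> real"
  assumes a: "convex_on D a" and b: "convex_on D b"
  shows "convex {(r, s). \<exists>d\<in>D. a d < r \<and> b d < s}"
proof (rule convexI, clarsimp)
  fix r1 s1 r2 s2 d1 d2 and u v :: real
  assume "d1 \<in> D" "a d1 < r1" "b d1 < s1" "d2 \<in> D" "a d2 < r2" "b d2 < s2"
    and uv: "0 \<le> u" "0 \<le> v" "u + v = 1"
  have "u *\<^sub>R d1 + v *\<^sub>R d2 \<in> D"
    using \<open>d1 \<in> D\<close> \<open>d2 \<in> D\<close> uv a unfolding convex_on_def convex_def by blast
  moreover have "a (u *\<^sub>R d1 + v *\<^sub>R d2) < u * r1 + v * r2"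
  proof -
    have "a (u *\<^sub>R d1 + v *\<^sub>R d2) \<le> u * a d1 + v * a d2"
      using \<open>d1 \<in> D\<close> \<open>d2 \<in> D\<close> uv a unfolding convex_on_def by blast
    also have "\<dots> < u * r1 + v * r2"
      using \<open>a d1 < r1\<close> \<open>a d2 < r2\<close> uv by (rule convex_combination_strict_less)
    finally show ?thesis .
  qed
  moreover have "b (u *\<^sub>R d1 + v *\<^sub>R d2) < u * s1 + v * s2"
  proof -
    have "b (u *\<^sub>R d1 + v *\<^sub>R d2) \<le> u * b d1 + v * b d2"
      using \<open>d1 \<in> D\<close> \<open>d2 \<in> D\<close> uv b unfolding convex_on_def by blast
    also have "\<dots> < u * s1 + v * s2"
      using \<open>b d1 < s1\<close> \<open>b d2 < s2\<close> uv by (rule convex_combination_strict_less)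
    finally show ?thesis .
  qed
  ultimately show "\<exists>d\<in>D. a d < u * r1 + v * r2 \<and> b d < u * s1 + v * s2"
    by blast
qed

lemma convex_alternative_two:
  fixes a b :: "'a::real_vector \<Rightarrow> real"
  assumes a: "convex_on D a" and b: "convex_on D b" and ab: "\<forall>d\<in>D. 0 \<le> a d \<or> 0 \<le> b d"
  shows "\<exists>\<alpha> \<beta>. 0 \<le> \<alpha> \<and> 0 \<le> \<beta> \<and> (\<alpha> \<noteq> 0 \<or> \<beta> \<noteq> 0) \<and> (\<forall>d\<in>D. 0 \<le> \<alpha> * a d + \<beta> * b d)"
proof (cases "D = {}")
  case True
  then show ?thesis
    by (intro exI[where x = 1]) simp
next
  case False
  then obtain d0 where "d0 \<in> D"
    by blast
  let ?S = "{(r, s). \<exists>d\<in>D. a d < r \<and> b d < s}"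
  have "convex ?S"
    using a b by (rule convex_joint_strict_epigraph_image)
  moreover have "0 \<notin> ?S"
  proof
    assume "0 \<in> ?S"
    then obtain d where "d \<in> D" "a d < 0" "b d < 0"
      by (auto simp: zero_prod_def)
    with ab show False
      by force
  qed
  ultimately have "\<exists>w. w \<noteq> 0 \<and> (\<forall>p\<in>?S. 0 \<le> w \<bullet> p)"
    by (intro separating_hyperplane_set_0)
  then obtain w where w: "w \<noteq> 0 \<and> (\<forall>p\<in>?S. 0 \<le> w \<bullet> p)" ..
  obtain \<alpha> \<beta> where w_eq: "w = (\<alpha>, \<beta>)"
    by (cases w)
  have sep: "0 \<le> \<alpha> * (a d + s) + \<beta> * (b d + t)" if "d \<in> D" "0 < s" "0 < t" for d s t
  proof -
    have "(a d + s, b d + t) \<in> ?S"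
      using that by (auto intro!: bexI[where x = d])
    then show ?thesis
      using w w_eq by (auto simp: inner_Pair)
  qed
  have "0 \<le> \<alpha>"
  proof (rule nonneg_slope_if_nonneg_on_pos)
    fix s :: real assume "0 < s"
    show "0 \<le> \<alpha> * s + (\<alpha> * a d0 + \<beta> * (b d0 + 1))"
      using sep[OF \<open>d0 \<in> D\<close> \<open>0 < s\<close> zero_less_one] by (simp add: algebra_simps)
  qed
  moreover have "0 \<le> \<beta>"
  proof (rule nonneg_slope_if_nonneg_on_pos)
    fix t :: real assume "0 < t"
    show "0 \<le> \<beta> * t + (\<alpha> * (a d0 + 1) + \<beta> * b d0)"
      using sep[OF \<open>d0 \<in> D\<close> zero_less_one \<open>0 < t\<close>] by (simp add: algebra_simps)
  qed
  moreover have "0 \<le> \<alpha> * a d + \<beta> * b d" if "d \<in> D" for d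
  proof (rule nonneg_intercept_if_nonneg_on_pos)
    fix s :: real assume "0 < s"
    show "0 \<le> (\<alpha> + \<beta>) * s + (\<alpha> * a d + \<beta> * b d)"
      using sep[OF that \<open>0 < s\<close> \<open>0 < s\<close>] by (simp add: algebra_simps)
  qed
  moreover have "\<alpha> \<noteq> 0 \<or> \<beta> \<noteq> 0"
    using w w_eq by (auto simp: zero_prod_def)
  ultimately show ?thesis
    by blast
qed

lemma combine_weights_insert:
  fixes p :: "'j \<Rightarrow> 'a \<Rightarrow> real"
  assumes "finite J" "j \<notin> J" and "\<forall>i\<in>J. 0 \<le> \<sigma> i" "\<exists>i\<in>J. \<sigma> i \<noteq> 0"
    and "0 \<le> \<alpha>" "0 \<le> \<beta>" "\<alpha> \<noteq> 0 \<or> \<beta> \<noteq> 0"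
  shows "\<exists>\<tau>. (\<forall>i\<in>insert j J. 0 \<le> \<tau> i) \<and> (\<exists>i\<in>insert j J. \<tau> i \<noteq> 0)
              \<and> (\<forall>d. (\<Sum>i\<in>insert j J. \<tau> i * p i d) = \<alpha> * (\<Sum>i\<in>J. \<sigma> i * p i d) + \<beta> * p j d)"
proof (intro exI conjI allI)
  let ?\<tau> = "\<lambda>i. if i = j then \<beta> else \<alpha> * \<sigma> i"
  show "\<forall>i\<in>insert j J. 0 \<le> ?\<tau> i"
    using assms(3,5,6) by simp
  show "\<exists>i\<in>insert j J. ?\<tau> i \<noteq> 0"
    using assms(2,4,7) by (cases "\<beta> = 0") force+
  fix d
  have "(\<Sum>i\<in>J. ?\<tau> i * p i d) = (\<Sum>i\<in>J. \<alpha> * (\<sigma> i * p i d))"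
    using assms(2) by (intro sum.cong) auto
  then show "(\<Sum>i\<in>insert j J. ?\<tau> i * p i d) = \<alpha> * (\<Sum>i\<in>J. \<sigma> i * p i d) + \<beta> * p j d"
    using assms(1,2) by (simp add: sum_distrib_left)
qed

lemma convex_alternative:
  fixes p :: "'j \<Rightarrow> 'a::real_vector \<Rightarrow> real"
  assumes "finite J" "J \<noteq> {}" and "convex D" and "\<forall>j\<in>J. convex_on D (p j)"
    and "\<forall>d\<in>D. \<exists>j\<in>J. 0 \<le> p j d"
  shows "\<exists>\<sigma>. (\<forall>j\<in>J. 0 \<le> \<sigma> j) \<and> (\<exists>j\<in>J. \<sigma> j \<noteq> 0) \<and> (\<forall>d\<in>D. 0 \<le> (\<Sum>j\<in>J. \<sigma> j * p j d))"
  using assms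
proof (induction J arbitrary: D rule: finite_ne_induct)
  case (singleton j)
  then show ?case
    by (intro exI[where x = "\<lambda>_. 1"]) simp
next
  case (insert j J)
  let ?D' = "{d \<in> D. p j d < 0}"
  have "convex ?D'"
    using insert.prems by (simp add: convex_strict_sublevel)
  moreover from this have "\<forall>i\<in>J. convex_on ?D' (p i)"
    using insert.prems by (auto intro: convex_on_subset)
  moreover have "\<forall>d\<in>?D'. \<exists>i\<in>J. 0 \<le> p i d"
    using insert.prems by fastforce
  ultimately have "\<exists>\<sigma>. (\<forall>i\<in>J. 0 \<le> \<sigma> i) \<and> (\<exists>i\<in>J. \<sigma> i \<noteq> 0) \<and> (\<forall>d\<in>?D'. 0 \<le> (\<Sum>i\<in>J. \<sigma> i * p i d))"
    by (rule insert.IH)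
  then obtain \<sigma> where \<sigma>: "\<forall>i\<in>J. 0 \<le> \<sigma> i" "\<exists>i\<in>J. \<sigma> i \<noteq> 0"
    and \<sigma>_D': "\<forall>d\<in>?D'. 0 \<le> (\<Sum>i\<in>J. \<sigma> i * p i d)"
    by blast
  let ?q = "\<lambda>d. \<Sum>i\<in>J. \<sigma> i * p i d"
  have "convex_on D ?q"
    using insert.prems \<sigma>(1) by (intro convex_on_sum_fun) auto
  moreover have "convex_on D (p j)"
    using insert.prems by simp
  moreover have "\<forall>d\<in>D. 0 \<le> ?q d \<or> 0 \<le> p j d"
    using \<sigma>_D' by (auto simp: not_le)
  ultimately have "\<exists>\<alpha> \<beta>. 0 \<le> \<alpha> \<and> 0 \<le> \<beta> \<and> (\<alpha> \<noteq> 0 \<or> \<beta> \<noteq> 0) \<and> (\<forall>d\<in>D. 0 \<le> \<alpha> * ?q d + \<beta> * p j d)"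
    by (rule convex_alternative_two)
  then obtain \<alpha> \<beta> where "0 \<le> \<alpha>" "0 \<le> \<beta>" "\<alpha> \<noteq> 0 \<or> \<beta> \<noteq> 0"
    and \<alpha>\<beta>: "\<forall>d\<in>D. 0 \<le> \<alpha> * ?q d + \<beta> * p j d"
    by blast
  from combine_weights_insert[OF insert.hyps(1,3) \<sigma> this(1-3), of p]
  obtain \<tau> where "\<forall>i\<in>insert j J. 0 \<le> \<tau> i" "\<exists>i\<in>insert j J. \<tau> i \<noteq> 0"
    and "\<And>d. (\<Sum>i\<in>insert j J. \<tau> i * p i d) = \<alpha> * ?q d + \<beta> * p j d"
    by blast
  with \<alpha>\<beta> show ?case
    by (intro exI[where x = \<tau>]) simp
qed

lemma sublinear_weighted_sum_subgradients:
  fixes p :: "'j \<Rightarrow> 'a::euclidean_space \<Rightarrow> real"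
  assumes "finite J" and "\<forall>j\<in>J. sublinear (p j)" and "\<forall>j\<in>J. 0 \<le> \<sigma> j"
    and "\<forall>x. z \<bullet> x \<le> (\<Sum>j\<in>J. \<sigma> j * p j x)"
  shows "\<exists>w. (\<forall>j\<in>J. \<forall>x. w j \<bullet> x \<le> p j x) \<and> (\<Sum>j\<in>J. \<sigma> j *\<^sub>R w j) = z"
proof -
  have "\<forall>j\<in>J. sublinear (\<lambda>x. \<sigma> j * p j x)"
    using assms(2,3) by (simp add: sublinear_cmult)
  then obtain v where v: "\<forall>j\<in>J. \<forall>x. v j \<bullet> x \<le> \<sigma> j * p j x" and v_sum: "(\<Sum>j\<in>J. v j) = z"
    using sublinear_sum_subgradient_decompose[OF assms(1) _ assms(4)] by blast
  have "\<forall>j\<in>J. \<exists>g. \<forall>x. g \<bullet> x \<le> p j x"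
    using assms(2) sublinear_has_subgradient by blast
  then obtain g where g: "\<forall>j\<in>J. \<forall>x. g j \<bullet> x \<le> p j x"
    by (metis bchoice)
  define w where "w j = (if \<sigma> j = 0 then g j else (1 / \<sigma> j) *\<^sub>R v j)" for j
  have "(\<forall>x. w j \<bullet> x \<le> p j x) \<and> \<sigma> j *\<^sub>R w j = v j" if "j \<in> J" for j
  proof (cases "\<sigma> j = 0")
    case True
    then have "v j \<bullet> v j \<le> 0"
      using v[rule_format, OF that, of "v j"] by simp
    then have "v j = 0"
      by (metis inner_gt_zero_iff not_le)
    with True g that show ?thesis
      by (simp add: w_def)
  next
    case False
    with assms(3) that have "0 < \<sigma> j"
      by force
    with v that show ?thesis
      by (simp add: w_def pos_divide_le_eq mult.commute)
  qed
  then show ?thesis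
    using v_sum by (intro exI[where x = w]) (simp cong: sum.cong)
qed

lemma sublinear_alternative:
  fixes p :: "'j \<Rightarrow> 'a::euclidean_space \<Rightarrow> real"
  assumes "finite J" "J \<noteq> {}" and "\<forall>j\<in>J. sublinear (p j)"
    and "convex D" "0 \<in> D" and "\<forall>d\<in>D. \<exists>j\<in>J. 0 \<le> p j d"
  shows "\<exists>\<sigma> w. (\<forall>j\<in>J. 0 \<le> \<sigma> j) \<and> (\<exists>j\<in>J. \<sigma> j \<noteq> 0) \<and> (\<forall>j\<in>J. \<forall>x. w j \<bullet> x \<le> p j x)
                 \<and> (\<forall>d\<in>D. 0 \<le> (\<Sum>j\<in>J. \<sigma> j *\<^sub>R w j) \<bullet> d)"
proof -
  have "\<forall>j\<in>J. convex_on D (p j)"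
    using assms(3,4) by (meson convex_on_subset sublinear_convex_on subset_UNIV)
  with assms obtain \<sigma> where \<sigma>: "\<forall>j\<in>J. 0 \<le> \<sigma> j" "\<exists>j\<in>J. \<sigma> j \<noteq> 0"
    and \<sigma>_D: "\<forall>d\<in>D. 0 \<le> (\<Sum>j\<in>J. \<sigma> j * p j d)"
    using convex_alternative[of J D p] by blast
  let ?\<psi> = "\<lambda>x. \<Sum>j\<in>J. \<sigma> j * p j x"
  have \<psi>: "sublinear ?\<psi>"
    using assms(3) \<sigma>(1) by (simp add: sublinear_sum sublinear_cmult)
  have "\<exists>z. (\<forall>x. z \<bullet> x \<le> ?\<psi> x) \<and> (\<forall>d\<in>D. 0 \<le> z \<bullet> d)"
    using convex_concave_sandwich[of ?\<psi> D "\<lambda>_. 0"] assms(4,5) \<sigma>_D sublinear_zero[OF \<psi>]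
    by (simp add: sublinear_convex_on[OF \<psi>] concave_on_const)
  then obtain z where z: "\<forall>x. z \<bullet> x \<le> ?\<psi> x" and z_D: "\<forall>d\<in>D. 0 \<le> z \<bullet> d"
    by blast
  obtain w where "\<forall>j\<in>J. \<forall>x. w j \<bullet> x \<le> p j x" and "(\<Sum>j\<in>J. \<sigma> j *\<^sub>R w j) = z"
    using sublinear_weighted_sum_subgradients[OF assms(1,3) \<sigma>(1) z] by blast
  with \<sigma> z_D show ?thesis
    by blast
qed

section \<open>Upper limits along filters\<close>

lemma Limsup_filter_mono: "F \<le> G \<Longrightarrow> Limsup F f \<le> Limsup G f"
  unfolding Limsup_def by (rule INF_mono) (auto intro: filter_leD)

lemma Limsup_compose_filterlim_le:
  assumes "filterlim T F F"
  shows "Limsup F (\<lambda>z. f (T z)) \<le> Limsup F f"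
proof -
  have "Limsup F (\<lambda>z. f (T z)) \<le> Limsup (filtermap T F) f"
    by (rule Limsup_filtermap_ge)
  also have "\<dots> \<le> Limsup F f"
    using assms unfolding filterlim_def by (rule Limsup_filter_mono)
  finally show ?thesis .
qed

lemma Limsup_add_le:
  fixes f g :: "'a \<Rightarrow> real"
  assumes f: "Limsup F (\<lambda>z. ereal (f z)) \<le> ereal a" and g: "Limsup F (\<lambda>z. ereal (g z)) \<le> ereal b"
  shows "Limsup F (\<lambda>z. ereal (f z + g z)) \<le> ereal (a + b)"
proof (rule ereal_le_epsilon2)
  fix e :: real assume "0 < e"
  have "eventually (\<lambda>z. ereal (f z) < ereal (a + e / 2)) F"
    by (rule Limsup_lessD, rule order.strict_trans1[OF f]) (use \<open>0 < e\<close> in simp)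
  moreover have "eventually (\<lambda>z. ereal (g z) < ereal (b + e / 2)) F"
    by (rule Limsup_lessD, rule order.strict_trans1[OF g]) (use \<open>0 < e\<close> in simp)
  ultimately have "eventually (\<lambda>z. ereal (f z + g z) \<le> ereal (a + b + e)) F"
    by eventually_elim simp
  then have "Limsup F (\<lambda>z. ereal (f z + g z)) \<le> ereal (a + b + e)"
    by (rule Limsup_bounded)
  then show "Limsup F (\<lambda>z. ereal (f z + g z)) \<le> ereal (a + b) + ereal e"
    by simp
qed

lemma filterlim_at_within_self:
  assumes "a \<notin> S" and "(T \<longlongrightarrow> a) (at a within S)" and "\<And>z. z \<in> S \<Longrightarrow> T z \<in> S"
  shows "filterlim T (at a within S) (at a within S)"
proof (rule filterlim_at_withinI)
  show "eventually (\<lambda>z. T z \<in> S - {a}) (at a within S)"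
    using assms(1,3) by (auto simp: eventually_at_filter)
qed (fact assms(2))

section \<open>Clarke derivatives with respect to the continuous variables\<close>

definition clarke_dom :: "'n set \<Rightarrow> real^'n \<Rightarrow> ((real^'n) \<times> real) set" where
  "clarke_dom Iz x = {(y, t). (\<forall>i\<in>Iz. y$i = x$i) \<and> 0 < t}"

definition diff_quot :: "('a::real_vector \<Rightarrow> real) \<Rightarrow> 'a \<Rightarrow> 'a \<times> real \<Rightarrow> real" where
  "diff_quot h s = (\<lambda>(y, t). (h (y + t *\<^sub>R s) - h y) / t)"

lemma diff_quot_add:
  "diff_quot h (s1 + s2) z = diff_quot h s1 z + diff_quot h s2 (fst z + snd z *\<^sub>R s1, snd z)"
  by (simp add: diff_quot_def case_prod_unfold scaleR_add_right add.assoc diff_divide_distrib)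

lemma diff_quot_scaleR:
  assumes "c \<noteq> 0"
  shows "diff_quot h (c *\<^sub>R s) z = c * diff_quot h s (fst z, c * snd z)"
  using assms by (simp add: diff_quot_def case_prod_unfold mult.commute)

lemma clarke_c_eq_Limsup:
  "clarke_c Iz h x s = Limsup (at (x, 0) within clarke_dom Iz x) (\<lambda>z. ereal (diff_quot h s z))"
  unfolding clarke_c_def clarke_dom_def diff_quot_def by (simp add: case_prod_unfold)

lemma clarke_jahn_c_le_clarke_c: "clarke_jahn_c Iz l u h x d \<le> clarke_c Iz h x d"
  unfolding clarke_jahn_c_def clarke_c_def
  by (intro Limsup_filter_mono at_le) auto

lemma at_within_clarke_dom_ne_bot: "at (x, 0) within clarke_dom Iz x \<noteq> bot"
proof -
  have "(x, 0) islimpt clarke_dom Iz x"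
  proof (rule islimptI)
    fix U assume "(x, 0::real) \<in> U" "open U"
    then obtain e where "0 < e" and e: "ball (x, 0) e \<subseteq> U"
      using open_contains_ball by blast
    then have "(x, e / 2) \<in> U"
      by (auto simp: dist_Pair_Pair dist_real_def)
    moreover have "(x, e / 2) \<in> clarke_dom Iz x"
      using \<open>0 < e\<close> by (simp add: clarke_dom_def)
    ultimately show "\<exists>y\<in>clarke_dom Iz x. y \<in> U \<and> y \<noteq> (x, 0)"
      using \<open>0 < e\<close> by force
  qed
  then show ?thesis
    using trivial_limit_within by blast
qed

lemma eventually_at_within_clarke_dom:
  "eventually (\<lambda>z. z \<in> clarke_dom Iz x) (at (x, 0) within clarke_dom Iz x)"
  by (simp add: eventually_at_filter)

lemma clarke_c_zero: "clarke_c Iz h x 0 = 0"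
proof -
  have "(\<lambda>z. ereal (diff_quot h 0 z)) = (\<lambda>_. 0)"
    by (simp add: diff_quot_def case_prod_unfold zero_ereal_def)
  then show ?thesis
    unfolding clarke_c_eq_Limsup using Limsup_const[OF at_within_clarke_dom_ne_bot] by simp
qed

lemma clarke_c_finite:
  assumes "lipschitz_c Iz h" and s: "\<forall>i\<in>Iz. s$i = 0"
  shows "\<bar>clarke_c Iz h x s\<bar> \<noteq> \<infinity>"
proof -
  obtain L where L: "\<forall>x y. (\<forall>i\<in>Iz. x$i = y$i) \<longrightarrow> \<bar>h x - h y\<bar> \<le> L * norm (x - y)"
    using assms(1) unfolding lipschitz_c_def by blast
  have bound: "\<bar>diff_quot h s z\<bar> \<le> L * norm s" if "z \<in> clarke_dom Iz x" for z
  proof -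
    obtain y t where z: "z = (y, t)"
      by (cases z)
    with that have "0 < t"
      by (simp add: clarke_dom_def)
    have "\<forall>i\<in>Iz. (y + t *\<^sub>R s)$i = y$i"
      using s by simp
    with L have "\<bar>h (y + t *\<^sub>R s) - h y\<bar> \<le> L * norm (y + t *\<^sub>R s - y)"
      by blast
    then have "\<bar>h (y + t *\<^sub>R s) - h y\<bar> \<le> L * (t * norm s)"
      using \<open>0 < t\<close> by simp
    moreover have "\<bar>diff_quot h s z\<bar> = \<bar>h (y + t *\<^sub>R s) - h y\<bar> / t"
      using \<open>0 < t\<close> by (simp add: z diff_quot_def abs_divide)
    ultimately show ?thesis
      using \<open>0 < t\<close> by (simp add: divide_le_eq mult_ac)
  qed
  have ev: "eventually (\<lambda>z. \<bar>diff_quot h s z\<bar> \<le> L * norm s) (at (x, 0) within clarke_dom Iz x)"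
    using eventually_at_within_clarke_dom by (rule eventually_mono) (rule bound)
  have "clarke_c Iz h x s \<le> ereal (L * norm s)"
    unfolding clarke_c_eq_Limsup using ev by (intro Limsup_bounded, eventually_elim) simp
  moreover have "ereal (- (L * norm s)) \<le> clarke_c Iz h x s"
    unfolding clarke_c_eq_Limsup using ev
    by (intro le_Limsup[OF at_within_clarke_dom_ne_bot], eventually_elim) simp
  ultimately show ?thesis
    by auto
qed

lemma clarke_c_add_le:
  fixes x s1 s2 :: "real^'n"
  assumes "lipschitz_c Iz h" and s1: "\<forall>i\<in>Iz. s1$i = 0" and s2: "\<forall>i\<in>Iz. s2$i = 0"
  shows "clarke_c Iz h x (s1 + s2) \<le> clarke_c Iz h x s1 + clarke_c Iz h x s2"
proof -
  let ?F = "at (x, 0) within clarke_dom Iz x"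
  obtain a b where a: "clarke_c Iz h x s1 = ereal a" and b: "clarke_c Iz h x s2 = ereal b"
    using clarke_c_finite[OF assms(1) s1] clarke_c_finite[OF assms(1) s2] by (metis ereal_real')
  define T where "T z = (fst z + snd z *\<^sub>R s1, snd z)" for z :: "(real^'n) \<times> real"
  have "filterlim T ?F ?F"
  proof (rule filterlim_at_within_self)
    show "(x, 0) \<notin> clarke_dom Iz x"
      by (simp add: clarke_dom_def)
    have "(T \<longlongrightarrow> (fst (x, 0::real) + snd (x, 0::real) *\<^sub>R s1, snd (x, 0::real))) ?F"
      unfolding T_def by (intro tendsto_intros)
    then show "(T \<longlongrightarrow> (x, 0)) ?F"
      by simp
    show "T z \<in> clarke_dom Iz x" if "z \<in> clarke_dom Iz x" for z
      using that s1 by (auto simp: T_def clarke_dom_def)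
  qed
  have "Limsup ?F (\<lambda>z. ereal (diff_quot h s1 z)) \<le> ereal a"
    using a unfolding clarke_c_eq_Limsup by simp
  moreover have "Limsup ?F (\<lambda>z. ereal (diff_quot h s2 (T z))) \<le> ereal b"
    using Limsup_compose_filterlim_le[OF \<open>filterlim T ?F ?F\<close>, of "\<lambda>z. ereal (diff_quot h s2 z)"] b
    unfolding clarke_c_eq_Limsup by simp
  ultimately have "Limsup ?F (\<lambda>z. ereal (diff_quot h s1 z + diff_quot h s2 (T z))) \<le> ereal (a + b)"
    by (rule Limsup_add_le[where f = "diff_quot h s1" and g = "\<lambda>z. diff_quot h s2 (T z)"])
  then show ?thesis
    unfolding a b unfolding clarke_c_eq_Limsup diff_quot_add by (simp add: T_def)
qed

lemma clarke_c_scaleR_le: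
  fixes x s :: "real^'n"
  assumes "0 < c"
  shows "clarke_c Iz h x (c *\<^sub>R s) \<le> ereal c * clarke_c Iz h x s"
proof -
  let ?F = "at (x, 0) within clarke_dom Iz x"
  define T where "T z = (fst z, c * snd z)" for z :: "(real^'n) \<times> real"
  have "filterlim T ?F ?F"
  proof (rule filterlim_at_within_self)
    show "(x, 0) \<notin> clarke_dom Iz x"
      by (simp add: clarke_dom_def)
    have "(T \<longlongrightarrow> (fst (x, 0::real), c * snd (x, 0::real))) ?F"
      unfolding T_def by (intro tendsto_intros)
    then show "(T \<longlongrightarrow> (x, 0)) ?F"
      by simp
    show "T z \<in> clarke_dom Iz x" if "z \<in> clarke_dom Iz x" for z
      using that assms by (auto simp: T_def clarke_dom_def)
  qed
  have "clarke_c Iz h x (c *\<^sub>R s) = Limsup ?F (\<lambda>z. ereal c * ereal (diff_quot h s (T z)))"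
    unfolding clarke_c_eq_Limsup diff_quot_scaleR[OF less_imp_neq[OF assms, symmetric]] by (simp add: T_def)
  also have "\<dots> = ereal c * Limsup ?F (\<lambda>z. ereal (diff_quot h s (T z)))"
    using assms by (intro Limsup_ereal_mult_left[OF at_within_clarke_dom_ne_bot]) simp
  also have "\<dots> \<le> ereal c * clarke_c Iz h x s"
    unfolding clarke_c_eq_Limsup
    using assms by (intro ereal_mult_left_mono Limsup_compose_filterlim_le[OF \<open>filterlim T ?F ?F\<close>]) simp
  finally show ?thesis .
qed

definition cont_proj :: "'n set \<Rightarrow> real^'n \<Rightarrow> real^'n" where
  "cont_proj Iz s = (\<chi> i. if i \<in> Iz then 0 else s$i)"

lemma cont_proj_integer_coords: "\<forall>i\<in>Iz. cont_proj Iz s $ i = 0"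
  by (simp add: cont_proj_def)

lemma cont_proj_id: "\<forall>i\<in>Iz. s$i = 0 \<Longrightarrow> cont_proj Iz s = s"
  by (simp add: cont_proj_def vec_eq_iff)

lemma cont_proj_add: "cont_proj Iz (s1 + s2) = cont_proj Iz s1 + cont_proj Iz s2"
  by (simp add: cont_proj_def vec_eq_iff)

lemma cont_proj_scaleR: "cont_proj Iz (c *\<^sub>R s) = c *\<^sub>R cont_proj Iz s"
  by (simp add: cont_proj_def vec_eq_iff)

text \<open>
  clarke_c is finite only in directions that keep the integer variables fixed; projecting
  onto these directions first makes the Clarke derivative a sublinear function on the whole space.
\<close>

definition clarke_proj :: "'n set \<Rightarrow> (real^'n \<Rightarrow> real) \<Rightarrow> real^'n \<Rightarrow> real^'n \<Rightarrow> real" where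
  "clarke_proj Iz h x s = real_of_ereal (clarke_c Iz h x (cont_proj Iz s))"

lemma clarke_c_cont_proj:
  assumes "lipschitz_c Iz h"
  shows "clarke_c Iz h x (cont_proj Iz s) = ereal (clarke_proj Iz h x s)"
  using clarke_c_finite[OF assms cont_proj_integer_coords] by (simp add: clarke_proj_def ereal_real')

lemma clarke_c_eq_clarke_proj:
  assumes "lipschitz_c Iz h" and "\<forall>i\<in>Iz. s$i = 0"
  shows "clarke_c Iz h x s = ereal (clarke_proj Iz h x s)"
  using clarke_c_cont_proj[OF assms(1)] cont_proj_id[OF assms(2)] by metis

lemma sublinear_clarke_proj:
  assumes "lipschitz_c Iz h"
  shows "sublinear (clarke_proj Iz h x)"
proof (rule sublinearI)
  fix s1 s2
  have "ereal (clarke_proj Iz h x (s1 + s2)) \<le> ereal (clarke_proj Iz h x s1) + ereal (clarke_proj Iz h x s2)"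
    using clarke_c_add_le[OF assms cont_proj_integer_coords cont_proj_integer_coords]
    by (simp add: clarke_c_cont_proj[OF assms, symmetric] cont_proj_add)
  then show "clarke_proj Iz h x (s1 + s2) \<le> clarke_proj Iz h x s1 + clarke_proj Iz h x s2"
    by simp
next
  fix c :: real and s assume "0 \<le> c"
  show "clarke_proj Iz h x (c *\<^sub>R s) \<le> c * clarke_proj Iz h x s"
  proof (cases "c = 0")
    case True
    then show ?thesis
      by (simp add: clarke_proj_def clarke_c_zero cont_proj_id)
  next
    case False
    with \<open>0 \<le> c\<close> have "0 < c"
      by simp
    then have "ereal (clarke_proj Iz h x (c *\<^sub>R s)) \<le> ereal c * ereal (clarke_proj Iz h x s)"
      using clarke_c_scaleR_le by (simp add: clarke_c_cont_proj[OF assms, symmetric] cont_proj_scaleR)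
    then show ?thesis
      by simp
  qed
qed

lemma clarke_proj_nonneg_if_clarke_jahn_nonneg:
  assumes "lipschitz_c Iz h" and "\<forall>i\<in>Iz. d$i = 0" and "0 \<le> clarke_jahn_c Iz l u h x d"
  shows "0 \<le> clarke_proj Iz h x d"
proof -
  have "0 \<le> ereal (clarke_proj Iz h x d)"
    using assms(3) clarke_jahn_c_le_clarke_c[of Iz l u h x d] clarke_c_eq_clarke_proj[OF assms(1,2)]
    by (metis order_trans)
  then show ?thesis
    by simp
qed

lemma in_subdiff_c_if_le_clarke_proj:
  fixes w :: "real^'n"
  assumes "lipschitz_c Iz h" and le: "\<forall>s. w \<bullet> s \<le> clarke_proj Iz h x s"
  shows "w \<in> subdiff_c Iz h x"
  unfolding subdiff_c_def
proof (intro CollectI conjI ballI allI impI)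
  fix i assume "i \<in> Iz"
  then have "cont_proj Iz (axis i 1) = 0" "cont_proj Iz (- axis i 1) = 0"
    by (auto simp: cont_proj_def vec_eq_iff axis_def)
  then have "clarke_proj Iz h x (axis i 1) = 0" "clarke_proj Iz h x (- axis i 1) = 0"
    by (simp_all add: clarke_proj_def clarke_c_zero)
  then show "w $ i = 0"
    using le[rule_format, of "axis i 1"] le[rule_format, of "- axis i 1"] by (simp add: inner_axis)
next
  fix s :: "real^'n" assume "\<forall>i\<in>Iz. s$i = 0"
  then show "ereal (s \<bullet> w) \<le> clarke_c Iz h x s"
    using le clarke_c_eq_clarke_proj[OF assms(1)] by (simp add: inner_commute)
qed

lemma convex_dirs_c: "convex (dirs_c Iz l u x)"
  unfolding convex_def dirs_c_def
  by (simp add: add_nonneg_nonneg add_nonpos_nonpos mult_nonneg_nonpos)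

lemma zero_in_dirs_c: "0 \<in> dirs_c Iz l u x"
  by (simp add: dirs_c_def)

theorem mainTheorem3:
  fixes Ic Iz :: "'n::finite set"
    and l u xs :: "real^'n"
    and q :: nat
    and f :: "nat \<Rightarrow> real^'n \<Rightarrow> real"
  assumes "q \<ge> 1"
    and "Ic \<union> Iz = UNIV" and "Ic \<inter> Iz = {}" and "Ic \<noteq> {}" and "Iz \<noteq> {}"
    and "\<forall>i. l$i < u$i"
    and "\<forall>i\<in>Iz. l$i \<in> \<int> \<and> u$i \<in> \<int>"
    and "\<forall>i\<in>{1..q}. lipschitz_c Iz (f i)"
    and "xs \<in> box_X l u \<inter> int_Z Iz"
    and "pareto_clarke_jahn_stationary_c Iz l u q f xs"
  shows "pareto_clarke_stationary_c Iz l u q f xs"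
proof -
  note lip = assms(8)
  let ?p = "\<lambda>j. clarke_proj Iz (f j) xs"
  have nonneg: "\<forall>d\<in>dirs_c Iz l u xs. \<exists>j\<in>{1..q}. 0 \<le> ?p j d"
    using assms(10) lip clarke_proj_nonneg_if_clarke_jahn_nonneg
    unfolding pareto_clarke_jahn_stationary_c_def dirs_c_def by blast
  have sublin: "\<forall>j\<in>{1..q}. sublinear (?p j)"
    using lip sublinear_clarke_proj by blast
  have "\<exists>\<sigma> w. (\<forall>j\<in>{1..q}. 0 \<le> \<sigma> j) \<and> (\<exists>j\<in>{1..q}. \<sigma> j \<noteq> 0) \<and> (\<forall>j\<in>{1..q}. \<forall>s. w j \<bullet> s \<le> ?p j s)
              \<and> (\<forall>d\<in>dirs_c Iz l u xs. 0 \<le> (\<Sum>j\<in>{1..q}. \<sigma> j *\<^sub>R w j) \<bullet> d)"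
    by (rule sublinear_alternative) (use assms(1) sublin nonneg convex_dirs_c zero_in_dirs_c in auto)
  then obtain \<sigma> w where \<sigma>: "\<forall>j\<in>{1..q}. 0 \<le> \<sigma> j" "\<exists>j\<in>{1..q}. \<sigma> j \<noteq> 0"
    and w: "\<forall>j\<in>{1..q}. \<forall>s. w j \<bullet> s \<le> ?p j s"
    and stat: "\<forall>d\<in>dirs_c Iz l u xs. 0 \<le> (\<Sum>j\<in>{1..q}. \<sigma> j *\<^sub>R w j) \<bullet> d"
    by blast
  have "\<forall>j\<in>{1..q}. w j \<in> subdiff_c Iz (f j) xs"
    using lip w in_subdiff_c_if_le_clarke_proj by blast
  then show ?thesis
    unfolding pareto_clarke_stationary_c_def minkowski_sum_scaled_def
    using assms(9) \<sigma> stat by blast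
qed

end
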